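(* Let $\alpha\in\mathbb C$ and let $u(k),v(k),f(k),g(k)$, $k\ge0$, be defined by $u(0)=v(0)=0$, $f(0)=g(0)=1$ and, for $k\ge1$, $u(k)=u(k-1)+f(k-1)$, $v(k)=v(k-1)+g(k-1)$, $f(k)=\frac{u(k)}{v(k)}g(k-1)$, $g(k)=\frac{\alpha v(k)}{k-\alpha u(k)/f(k-1)-\alpha v(k)/g(k-1)}$. Put $h(k)=(f(k)g(k))^{-1}$ and $w(0)=0$, $w(k)=w(k-1)+h(k-1)$ for $k\ge1$. Then, for all $k$ such that the arguments are nonnegative integers, $$w(3k-1)=\frac{k-1+2\alpha}{1-2\alpha}\Pi_3(k),\quad w(3k)=\frac{k}{1-2\alpha}\Pi_3(k),\quad w(3k+1)=\frac{k+1-2\alpha}{1-2\alpha}\Pi_3(k),$$ $$h(3k-1)=h(3k)=\Pi_3(k),\qquad h(3k+1)=\frac{k+1-2\alpha}{k+\alpha}\Pi_3(k),$$ where $$\Pi_3(k)=\frac{(1-\alpha)(2-\alpha)\cdots(k-\alpha)}{\alpha(1+\alpha)\cdots(k-1+\alpha)}\cdot\frac{(1-2\alpha)(2-2\alpha)\cdots(k-2\alpha)}{2\alpha(1+2\alpha)\cdots(k-1+2\alpha)}.$$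
   Context: Empty products equal $1$ (so $\Pi_3(0)=1$). The parameter $\alpha$ is such that all denominators occurring are nonzero. *)

theory Defs
  imports Complex_Main
begin

fun ufvg :: "complex \<Rightarrow> nat \<Rightarrow> complex \<times> complex \<times> complex \<times> complex" where
  "ufvg a 0 = (0, 0, 1, 1)"
| "ufvg a (Suc n) =
     (case ufvg a n of (u, v, f, g) \<Rightarrow>
        let u' = u + f; v' = v + g;
            f' = u' / v' * g;
            g' = a * v' / (of_nat (Suc n) - a * u' / f - a * v' / g)
        in (u', v', f', g'))"

definition useq :: "complex \<Rightarrow> nat \<Rightarrow> complex" where
  "useq a k = fst (ufvg a k)"
definition vseq :: "complex \<Rightarrow> nat \<Rightarrow> complex" where
  "vseq a k = fst (snd (ufvg a k))"
definition fseq :: "complex \<Rightarrow> nat \<Rightarrow> complex" where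
  "fseq a k = fst (snd (snd (ufvg a k)))"
definition gseq :: "complex \<Rightarrow> nat \<Rightarrow> complex" where
  "gseq a k = snd (snd (snd (ufvg a k)))"

text \<open>Denominator occurring in the definition of g(k), for k \<ge> 1 (argument k = Suc n).\<close>
definition gden :: "complex \<Rightarrow> nat \<Rightarrow> complex" where
  "gden a k = of_nat k - a * useq a k / fseq a (k - 1) - a * vseq a k / gseq a (k - 1)"

definition hseq :: "complex \<Rightarrow> nat \<Rightarrow> complex" where
  "hseq a k = inverse (fseq a k * gseq a k)"

fun wseq :: "complex \<Rightarrow> nat \<Rightarrow> complex" where
  "wseq a 0 = 0"
| "wseq a (Suc n) = wseq a n + hseq a n"

definition Pi3 :: "complex \<Rightarrow> nat \<Rightarrow> complex" where
  "Pi3 a k = (\<Prod>j\<in>{1..k}. of_nat j - a) / (\<Prod>j<k. of_nat j + a)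
           * ((\<Prod>j\<in>{1..k}. of_nat j - 2 * a) / (\<Prod>j<k. of_nat j + 2 * a))"

end

theory Submission
  imports Defs
begin

(* Over one period 3k \<rightarrow> 3k + 3 the recursion can be solved in closed form:
   (u, v, f, g)(3k) = (k/\<alpha> F(k), k/\<alpha> G(k), F(k), G(k)) with F = fprod \<alpha>, G = gprod \<alpha>,
   and \<Pi>\<^sub>3(k) = 1/(F(k) G(k)). In the step to 3k + 1 only g moves on, to G(k + 1), and in the
   step to 3k + 2 only f, to F(k + 1); the denominators of g in the three steps are
   k + 1 - 2\<alpha>, k + 1 - \<alpha> and k + 1. This gives h = 1/(f g) directly, and w by induction
   over the periods. *)

definition fprod :: "complex \<Rightarrow> nat \<Rightarrow> complex" where
  "fprod a k = (\<Prod>j<k. of_nat j + 2*a) / (\<Prod>j\<in>{1..k}. of_nat j - a)"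

definition gprod :: "complex \<Rightarrow> nat \<Rightarrow> complex" where
  "gprod a k = (\<Prod>j<k. of_nat j + a) / (\<Prod>j\<in>{1..k}. of_nat j - 2*a)"

lemma fprod_0 [simp]: "fprod a 0 = 1"
  by (simp add: fprod_def)

lemma gprod_0 [simp]: "gprod a 0 = 1"
  by (simp add: gprod_def)

lemma fprod_Suc: "fprod a (Suc k) = fprod a k * (of_nat k + 2*a) / (of_nat k + 1 - a)"
  by (simp add: fprod_def prod.nat_ivl_Suc' field_simps)

lemma gprod_Suc: "gprod a (Suc k) = gprod a k * (of_nat k + a) / (of_nat k + 1 - 2*a)"
  by (simp add: gprod_def prod.nat_ivl_Suc' field_simps)

lemma Pi3_eq_inverse: "Pi3 a k = inverse (fprod a k * gprod a k)"
  by (simp add: Pi3_def fprod_def gprod_def field_simps)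

lemma Pi3_Suc:
  "Pi3 a (Suc k) =
     Pi3 a k * (of_nat k + 1 - a) * (of_nat k + 1 - 2*a) / ((of_nat k + a) * (of_nat k + 2*a))"
  by (simp add: Pi3_eq_inverse fprod_Suc gprod_Suc field_simps)

lemma gden_Suc:
  "ufvg a n = (u, v, f, g) \<Longrightarrow>
     gden a (Suc n) = of_nat (Suc n) - a * (u + f) / f - a * (v + g) / g"
  by (simp add: gden_def useq_def vseq_def fseq_def gseq_def Let_def)

lemma ufvg_Suc_gden:
  "ufvg a n = (u, v, f, g) \<Longrightarrow>
     ufvg a (Suc n) = (u + f, v + g, (u + f) / (v + g) * g, a * (v + g) / gden a (Suc n))"
  by (simp add: gden_Suc Let_def)

declare ufvg.simps(2) [simp del]

locale ufvg_nondegenerate =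
  fixes a :: complex
  assumes v_nz: "\<And>k. k \<ge> 1 \<Longrightarrow> vseq a k \<noteq> 0"
    and f_nz: "\<And>k. fseq a k \<noteq> 0"
    and g_nz: "\<And>k. gseq a k \<noteq> 0"
    and gden_nz: "\<And>k. k \<ge> 1 \<Longrightarrow> gden a k \<noteq> 0"
    and one_minus_2a_nz: "1 - 2*a \<noteq> 0"
    and nat_plus_a_nz: "\<And>j::nat. of_nat j + a \<noteq> 0"
    and nat_plus_2a_nz: "\<And>j::nat. of_nat j + 2*a \<noteq> 0"
begin

lemma a_nz: "a \<noteq> 0"
  using nat_plus_a_nz[of 0] by simp

lemma ufvg_3k_plus_1:
  assumes ufvg_3k:
    "ufvg a (3*k) = (of_nat k / a * fprod a k, of_nat k / a * gprod a k, fprod a k, gprod a k)"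
  shows "ufvg a (3*k + 1) =
      ((of_nat k + a) / a * fprod a k, (of_nat k + a) / a * gprod a k, fprod a k, gprod a (Suc k))"
    and "gden a (3*k + 1) = of_nat k + 1 - 2*a"
proof -
  define F G where "F = fprod a k" and "G = gprod a k"
  have F_nz: "F \<noteq> 0" and G_nz: "G \<noteq> 0"
    using f_nz[of "3*k"] g_nz[of "3*k"] ufvg_3k by (simp_all add: fseq_def gseq_def F_def G_def)
  have ufvg_3k': "ufvg a (3*k) = (of_nat k / a * F, of_nat k / a * G, F, G)"
    using ufvg_3k by (simp add: F_def G_def)
  have u: "of_nat k / a * F + F = (of_nat k + a) / a * F"
   and v: "of_nat k / a * G + G = (of_nat k + a) / a * G"
    using a_nz by (simp_all add: field_simps)
  show gden: "gden a (3*k + 1) = of_nat k + 1 - 2*a"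
    unfolding gden_Suc[OF ufvg_3k', unfolded Suc_eq_plus1 u v] using a_nz F_nz G_nz
    by (simp add: field_simps)
  have f: "(of_nat k + a) / a * F / ((of_nat k + a) / a * G) * G = F"
    using a_nz G_nz nat_plus_a_nz[of k] by simp
  have g: "a * ((of_nat k + a) / a * G) / gden a (3*k + 1) = gprod a (Suc k)"
    unfolding gden gprod_Suc G_def[symmetric] using a_nz by simp
  show "ufvg a (3*k + 1) =
      ((of_nat k + a) / a * fprod a k, (of_nat k + a) / a * gprod a k, fprod a k, gprod a (Suc k))"
    using ufvg_Suc_gden[OF ufvg_3k', unfolded Suc_eq_plus1 u v f g] by (simp add: F_def G_def)
qed

lemma ufvg_3k_plus_2:
  assumes ufvg_3k:
    "ufvg a (3*k) = (of_nat k / a * fprod a k, of_nat k / a * gprod a k, fprod a k, gprod a k)"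
  shows "ufvg a (3*k + 2) =
      ((of_nat k + 2*a) / a * fprod a k, (of_nat k + 1 - a) / a * gprod a (Suc k),
       fprod a (Suc k), gprod a (Suc k))"
proof -
  define F G G' where "F = fprod a k" and "G = gprod a k" and "G' = gprod a (Suc k)"
  have ufvg_3k_1: "ufvg a (3*k + 1) = ((of_nat k + a) / a * F, (of_nat k + a) / a * G, F, G')"
    using ufvg_3k_plus_1(1)[OF ufvg_3k] by (simp add: F_def G_def G'_def)
  have F_nz: "F \<noteq> 0" and G'_nz: "G' \<noteq> 0"
    using f_nz[of "3*k + 1"] g_nz[of "3*k + 1"] ufvg_3k_1 by (simp_all add: fseq_def gseq_def)
  have "of_nat k + 1 - 2*a \<noteq> 0"
    using gden_nz[of "3*k + 1"] ufvg_3k_plus_1(2)[OF ufvg_3k] by simp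
  then have G_G': "(of_nat k + a) * G = (of_nat k + 1 - 2*a) * G'"
    by (simp add: G_def G'_def gprod_Suc)
  have u: "(of_nat k + a) / a * F + F = (of_nat k + 2*a) / a * F"
    using a_nz by (simp add: field_simps)
  have "(of_nat k + a) / a * G + G' = ((of_nat k + a) * G + a * G') / a"
    using a_nz by (simp add: field_simps)
  also have "\<dots> = (of_nat k + 1 - a) / a * G'"
    unfolding G_G' by (simp add: field_simps)
  finally have v: "(of_nat k + a) / a * G + G' = (of_nat k + 1 - a) / a * G'" .
  have "vseq a (3*k + 2) = (of_nat k + 1 - a) / a * G'"
    using ufvg_Suc_gden[OF ufvg_3k_1] v by (simp add: vseq_def)
  then have k1a_nz: "of_nat k + 1 - a \<noteq> 0"
    using v_nz[of "3*k + 2"] by auto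
  have f: "(of_nat k + 2*a) / a * F / ((of_nat k + 1 - a) / a * G') * G' = fprod a (Suc k)"
    unfolding fprod_Suc F_def[symmetric] using a_nz G'_nz k1a_nz by simp
  have Suc_eq: "Suc (3*k + 1) = 3*k + 2"
    by simp
  have "gden a (3*k + 2) = of_nat k + 1 - a"
    unfolding gden_Suc[OF ufvg_3k_1, unfolded Suc_eq u v] using a_nz F_nz G'_nz
    by (simp add: field_simps)
  then have g: "a * ((of_nat k + 1 - a) / a * G') / gden a (3*k + 2) = G'"
    using a_nz k1a_nz by simp
  from ufvg_Suc_gden[OF ufvg_3k_1, unfolded Suc_eq u v f g] show ?thesis
    by (simp add: F_def G'_def)
qed

lemma ufvg_3k_plus_3:
  assumes ufvg_3k:
    "ufvg a (3*k) = (of_nat k / a * fprod a k, of_nat k / a * gprod a k, fprod a k, gprod a k)"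
  shows "ufvg a (3 * Suc k) = (of_nat (Suc k) / a * fprod a (Suc k),
      of_nat (Suc k) / a * gprod a (Suc k), fprod a (Suc k), gprod a (Suc k))"
proof -
  define F F' G' where "F = fprod a k" and "F' = fprod a (Suc k)" and "G' = gprod a (Suc k)"
  have ufvg_3k_2: "ufvg a (3*k + 2) =
      ((of_nat k + 2*a) / a * F, (of_nat k + 1 - a) / a * G', F', G')"
    using ufvg_3k_plus_2[OF ufvg_3k] by (simp add: F_def F'_def G'_def)
  have F'_nz: "F' \<noteq> 0" and G'_nz: "G' \<noteq> 0"
    using f_nz[of "3*k + 2"] g_nz[of "3*k + 2"] ufvg_3k_2 by (simp_all add: fseq_def gseq_def)
  have "of_nat k + 1 - a \<noteq> 0"
    using v_nz[of "3*k + 2"] ufvg_3k_2 by (auto simp: vseq_def)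
  then have F_F': "(of_nat k + 1 - a) * F' = (of_nat k + 2*a) * F"
    by (simp add: F_def F'_def fprod_Suc)
  have "(of_nat k + 2*a) / a * F + F' = ((of_nat k + 2*a) * F + a * F') / a"
    using a_nz by (simp add: field_simps)
  also have "\<dots> = of_nat (Suc k) / a * F'"
    unfolding F_F'[symmetric] by (simp add: field_simps)
  finally have u: "(of_nat k + 2*a) / a * F + F' = of_nat (Suc k) / a * F'" .
  have Suc_k_nz: "of_nat (Suc k) \<noteq> (0::complex)"
    by (rule of_nat_neq_0)
  have v: "(of_nat k + 1 - a) / a * G' + G' = of_nat (Suc k) / a * G'"
    using a_nz by (simp add: field_simps)
  have f: "of_nat (Suc k) / a * F' / (of_nat (Suc k) / a * G') * G' = F'"
    using a_nz G'_nz Suc_k_nz by simp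
  have Suc_eq: "Suc (3*k + 2) = 3 * Suc k"
    by simp
  have "gden a (3 * Suc k) = of_nat (Suc k)"
    unfolding gden_Suc[OF ufvg_3k_2, unfolded Suc_eq u v] using a_nz F'_nz G'_nz
    by (simp add: field_simps)
  then have g: "a * (of_nat (Suc k) / a * G') / gden a (3 * Suc k) = G'"
    using a_nz Suc_k_nz by simp
  from ufvg_Suc_gden[OF ufvg_3k_2, unfolded Suc_eq u v f g] show ?thesis
    by (simp add: F'_def G'_def)
qed

lemma ufvg_3k:
  "ufvg a (3*k) = (of_nat k / a * fprod a k, of_nat k / a * gprod a k, fprod a k, gprod a k)"
proof (induction k)
  case 0
  then show ?case by simp
next
  case (Suc k)
  then show ?case by (rule ufvg_3k_plus_3)
qed

lemma hseq_3k: "hseq a (3*k) = Pi3 a k"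
  using ufvg_3k by (simp add: hseq_def fseq_def gseq_def Pi3_eq_inverse)

lemma hseq_3k_plus_1: "hseq a (3*k + 1) = (of_nat k + 1 - 2*a) / (of_nat k + a) * Pi3 a k"
  using ufvg_3k_plus_1(1)[OF ufvg_3k]
  by (simp add: hseq_def fseq_def gseq_def Pi3_eq_inverse gprod_Suc field_simps)

lemma hseq_3k_plus_2: "hseq a (3*k + 2) = Pi3 a (Suc k)"
  using ufvg_3k_plus_2[OF ufvg_3k] by (simp add: hseq_def fseq_def gseq_def Pi3_eq_inverse)

lemma wseq_3k_plus_1:
  assumes "wseq a (3*k) = of_nat k / (1 - 2*a) * Pi3 a k"
  shows "wseq a (3*k + 1) = (of_nat k + 1 - 2*a) / (1 - 2*a) * Pi3 a k"
  using assms hseq_3k one_minus_2a_nz by (simp add: field_simps)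

lemma wseq_3k_plus_2:
  assumes "wseq a (3*k) = of_nat k / (1 - 2*a) * Pi3 a k"
  shows "wseq a (3*k + 2) = (of_nat k + 2*a) / (1 - 2*a) * Pi3 a (Suc k)"
proof -
  have "wseq a (3*k + 2) = wseq a (3*k + 1) + hseq a (3*k + 1)"
    by (simp add: numeral_2_eq_2)
  also have "\<dots> = (of_nat k + 1 - 2*a) / (1 - 2*a) * Pi3 a k
      + (of_nat k + 1 - 2*a) / (of_nat k + a) * Pi3 a k"
    using wseq_3k_plus_1[OF assms] hseq_3k_plus_1 by simp
  also have "\<dots> = (of_nat k + 2*a) / (1 - 2*a) * Pi3 a (Suc k)"
    using one_minus_2a_nz nat_plus_a_nz[of k] nat_plus_2a_nz[of k]
    by (simp add: Pi3_Suc divide_simps) algebra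
  finally show ?thesis .
qed

lemma wseq_3k: "wseq a (3*k) = of_nat k / (1 - 2*a) * Pi3 a k"
proof (induction k)
  case 0
  then show ?case by simp
next
  case (Suc k)
  have "wseq a (3 * Suc k) = wseq a (3*k + 2) + hseq a (3*k + 2)"
    by (simp add: numeral_3_eq_3)
  also have "\<dots> = (of_nat k + 2*a) / (1 - 2*a) * Pi3 a (Suc k) + Pi3 a (Suc k)"
    using wseq_3k_plus_2[OF Suc.IH] hseq_3k_plus_2 by simp
  also have "\<dots> = of_nat (Suc k) / (1 - 2*a) * Pi3 a (Suc k)"
    using one_minus_2a_nz by (simp add: field_simps)
  finally show ?case .
qed

end

theorem corollary24:
  fixes a :: complex
  assumes v_nz: "\<And>k. k \<ge> 1 \<Longrightarrow> vseq a k \<noteq> 0"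
      and f_nz: "\<And>k. fseq a k \<noteq> 0"
      and g_nz: "\<And>k. gseq a k \<noteq> 0"
      and gden_nz: "\<And>k. k \<ge> 1 \<Longrightarrow> gden a k \<noteq> 0"
      and d1: "1 - 2 * a \<noteq> 0"
      and d2: "\<And>j::nat. of_nat j + a \<noteq> 0"
      and d3: "\<And>j::nat. of_nat j + 2 * a \<noteq> 0"
  shows "(\<forall>k::nat. k \<ge> 1 \<longrightarrow>
            wseq a (3*k - 1) = (of_nat k - 1 + 2*a) / (1 - 2*a) * Pi3 a k
          \<and> hseq a (3*k - 1) = Pi3 a k)
       \<and> (\<forall>k::nat.
            wseq a (3*k) = of_nat k / (1 - 2*a) * Pi3 a k
          \<and> wseq a (3*k + 1) = (of_nat k + 1 - 2*a) / (1 - 2*a) * Pi3 a k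
          \<and> hseq a (3*k) = Pi3 a k
          \<and> hseq a (3*k + 1) = (of_nat k + 1 - 2*a) / (of_nat k + a) * Pi3 a k)"
proof -
  interpret ufvg_nondegenerate a
    using assms by unfold_locales
  have "wseq a (3*k - 1) = (of_nat k - 1 + 2*a) / (1 - 2*a) * Pi3 a k
      \<and> hseq a (3*k - 1) = Pi3 a k" if "k \<ge> 1" for k
  proof -
    obtain m where k: "k = Suc m"
      using \<open>k \<ge> 1\<close> by (cases k) auto
    then have "3*k - 1 = 3*m + 2"
      by simp
    then show ?thesis
      using wseq_3k_plus_2[OF wseq_3k] hseq_3k_plus_2 k by simp
  qed
  then show ?thesis
    using wseq_3k wseq_3k_plus_1[OF wseq_3k] hseq_3k hseq_3k_plus_1 by simp
qed

end
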